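(* Let $z\in\mathbb{C}$ and $\omega_0,\dots,\omega_r\in\mathbb{C}$ with $\omega_0,\dots,\omega_r,\omega_0+\omega_1\in\mathbb{C}\setminus\mathbb{R}$. Then $$\frac{G_r(z|\omega_0,\omega_1,\omega_2,\dots,\omega_r)}{G_r(z|\omega_0,\omega_0+\omega_1,\omega_2,\dots,\omega_r)}=\frac{1}{G_r(z|-\omega_1,\omega_0+\omega_1,\omega_2,\dots,\omega_r)}.$$
   Context: Let $x=e^{2\pi iz}$, $q_j=e^{2\pi i\omega_j}$. q-shifted factorial: if all $|q_j|<1$, $(x|q_0,\dots,q_r)_\infty=\prod_{j_0,\dots,j_r\ge0}(1-xq_0^{j_0}\cdots q_r^{j_r})$; in general (symmetric in the $q_j$), if $|q_0|,\dots,|q_{k-1}|>1$ and the others $<1$, $(x|\underline q)_\infty=((q_0\cdots q_{k-1})^{-1}x|q_0^{-1},\dots,q_{k-1}^{-1},q_k,\dots,q_r)_\infty^{(-1)^k}$. Multiple elliptic gamma function: for $\omega_j\in\mathbb{C}\setminus\mathbb{R}$, $G_r(z|\omega_0,\dots,\omega_r)=(x^{-1}q_0\cdots q_r|q_0,\dots,q_r)_\infty\,(x|q_0,\dots,q_r)_\infty^{(-1)^r}$. *)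

theory Defs
  imports Complex_Main
begin

definition qpoch_box :: "complex \<Rightarrow> complex list \<Rightarrow> nat \<Rightarrow> complex" where
  "qpoch_box x qs N =
     (\<Prod>js \<in> {js. length js = length qs \<and> (\<forall>j\<in>set js. j < N)}.
        1 - x * prod_list (map2 (\<lambda>q j. q ^ j) qs js))"

text \<open>(x | q_0,...,q_r)_\<infinity> for |q_j| < 1: the (absolutely convergent) infinite product
  over N^(r+1), as the limit of the box partial products.\<close>
definition qpoch_conv :: "complex \<Rightarrow> complex list \<Rightarrow> complex" where
  "qpoch_conv x qs = lim (qpoch_box x qs)"

definition qpoch :: "complex \<Rightarrow> complex list \<Rightarrow> complex" where
  "qpoch x qs =
     (let big = filter (\<lambda>q. norm q > 1) qs;
          qs' = map (\<lambda>q. if norm q > 1 then inverse q else q) qs;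
          x' = inverse (prod_list big) * x
      in if even (length big) then qpoch_conv x' qs' else inverse (qpoch_conv x' qs'))"

text \<open>Multiple elliptic gamma function G_r(z | \<omega>_0,...,\<omega>_r), with r = length ws - 1.\<close>
definition ell_gamma :: "complex \<Rightarrow> complex list \<Rightarrow> complex" where
  "ell_gamma z ws =
     (let x = exp (2 * pi * \<i> * z);
          qs = map (\<lambda>w. exp (2 * pi * \<i> * w)) ws;
          A = qpoch (inverse x * prod_list qs) qs;
          B = qpoch x qs
      in A * (if even (length ws - 1) then B else inverse B))"

end

(* For |q_j| < 1 the q-shifted factorial is an absolutely convergent product over the
   multi-indices in N^(r+1), so it can be regrouped as an unconditional product. Splitting the
   exponents (k, m) of (q0, q1) into the cones k >= m and k < m gives
     (x | q0, q1, ...) = (x | q0, q0 q1, ...) (x q1 | q1, q0 q1, ...).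
   For parameters outside the unit disc the definition inverts them, and inverting one
   parameter q turns (x | ..., q, ...) into 1 / (x q^-1 | ..., q^-1, ...); rewriting every
   term in this way reduces the identity in each region of (|q0|, |q1|, |q0 q1|) to the disc
   case. Applied to both q-shifted factorials in G_r (the first after exchanging q0 and q1),
   the identity becomes the claimed relation between the three elliptic gamma functions. *)

theory Submission
  imports Defs "HOL-Analysis.Analysis"
begin

section \<open>Unconditional products\<close>

definition has_prod_on ::
    "('a \<Rightarrow> 'b::{topological_semigroup_mult, comm_monoid_mult}) \<Rightarrow> 'a set \<Rightarrow> 'b \<Rightarrow> bool"
  where
  "has_prod_on f A p \<longleftrightarrow> ((\<lambda>F. \<Prod>i\<in>F. f i) \<longlongrightarrow> p) (finite_subsets_at_top A)"

lemma has_prod_on_cong: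
  assumes "\<And>x. x \<in> A \<Longrightarrow> f x = g x" and "has_prod_on f A p"
  shows "has_prod_on g A p"
proof -
  have "\<forall>\<^sub>F F in finite_subsets_at_top A. (\<Prod>i\<in>F. f i) = (\<Prod>i\<in>F. g i)"
    by (rule eventually_finite_subsets_at_top_weakI) (use assms(1) in \<open>auto intro!: prod.cong\<close>)
  thus ?thesis using assms(2) unfolding has_prod_on_def by (rule tendsto_cong[THEN iffD1])
qed

lemma has_prod_on_finite: "finite A \<Longrightarrow> has_prod_on f A (\<Prod>i\<in>A. f i)"
  unfolding has_prod_on_def by (simp add: finite_subsets_at_top_finite tendsto_principal_singleton)

lemma filterlim_Int_finite_subsets_at_top:
  assumes "B \<subseteq> A"
  shows "filterlim (\<lambda>F. F \<inter> B) (finite_subsets_at_top B) (finite_subsets_at_top A)"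
  unfolding filterlim_finite_subsets_at_top
proof (intro allI impI)
  fix X assume X: "finite X \<and> X \<subseteq> B"
  show "\<forall>\<^sub>F F in finite_subsets_at_top A. finite (F \<inter> B) \<and> X \<subseteq> F \<inter> B \<and> F \<inter> B \<subseteq> B"
    unfolding eventually_finite_subsets_at_top by (rule exI[of _ X]) (use X assms in auto)
qed

lemma has_prod_on_Un_disjoint:
  assumes "A \<inter> B = {}" and "has_prod_on f A p" and "has_prod_on f B q"
  shows "has_prod_on f (A \<union> B) (p * q)"
proof -
  have "((\<lambda>F. \<Prod>i\<in>F \<inter> C. f i) \<longlongrightarrow> r) (finite_subsets_at_top (A \<union> B))"
    if "C \<subseteq> A \<union> B" "has_prod_on f C r" for C r
    using filterlim_compose[OF that(2)[unfolded has_prod_on_def]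
        filterlim_Int_finite_subsets_at_top[OF that(1)]] by simp
  hence "((\<lambda>F. (\<Prod>i\<in>F \<inter> A. f i) * (\<Prod>i\<in>F \<inter> B. f i)) \<longlongrightarrow> p * q) (finite_subsets_at_top (A \<union> B))"
    using assms(2,3) by (intro tendsto_mult) auto
  moreover have "\<forall>\<^sub>F F in finite_subsets_at_top (A \<union> B).
      (\<Prod>i\<in>F \<inter> A. f i) * (\<Prod>i\<in>F \<inter> B. f i) = (\<Prod>i\<in>F. f i)"
  proof (rule eventually_finite_subsets_at_top_weakI)
    fix F assume "finite F" "F \<subseteq> A \<union> B"
    hence "F = (F \<inter> A) \<union> (F \<inter> B)" by blast
    hence "(\<Prod>i\<in>F. f i) = (\<Prod>i\<in>(F \<inter> A) \<union> (F \<inter> B). f i)" by simp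
    also have "\<dots> = (\<Prod>i\<in>F \<inter> A. f i) * (\<Prod>i\<in>F \<inter> B. f i)"
      by (rule prod.union_disjoint) (use \<open>finite F\<close> assms(1) in auto)
    finally show "(\<Prod>i\<in>F \<inter> A. f i) * (\<Prod>i\<in>F \<inter> B. f i) = (\<Prod>i\<in>F. f i)" ..
  qed
  ultimately show ?thesis unfolding has_prod_on_def by (rule tendsto_cong[THEN iffD1, rotated])
qed

lemma has_prod_on_reindex:
  assumes "inj_on h A" and "has_prod_on f (h ` A) p"
  shows "has_prod_on (f \<circ> h) A p"
proof -
  have "((\<lambda>F. \<Prod>i\<in>h ` F. f i) \<longlongrightarrow> p) (finite_subsets_at_top A)"
    using assms(2) unfolding has_prod_on_def filtermap_image_finite_subsets_at_top[OF assms(1), symmetric]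
    by (simp add: filterlim_filtermap)
  moreover have "\<forall>\<^sub>F F in finite_subsets_at_top A. (\<Prod>i\<in>h ` F. f i) = (\<Prod>i\<in>F. (f \<circ> h) i)"
    by (rule eventually_finite_subsets_at_top_weakI)
      (use assms(1) in \<open>metis comp_apply inj_on_subset prod.reindex_cong\<close>)
  ultimately show ?thesis unfolding has_prod_on_def by (rule tendsto_cong[THEN iffD1, rotated])
qed

lemma finite_norm_ge_if_summable_on:
  fixes g :: "'a \<Rightarrow> 'b::real_normed_vector"
  assumes summable: "(\<lambda>i. norm (g i)) summable_on A" and "0 < c"
  shows "finite {i\<in>A. c \<le> norm (g i)}"
proof (rule ccontr)
  assume "infinite {i\<in>A. c \<le> norm (g i)}"
  define C where "C = infsum (\<lambda>i. norm (g i)) A"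
  obtain n :: nat where n: "C / c < real n" using reals_Archimedean2 by blast
  obtain T where T: "T \<subseteq> {i\<in>A. c \<le> norm (g i)}" "finite T" "card T = n"
    using \<open>infinite _\<close> infinite_arbitrarily_large by blast
  have "real n * c = (\<Sum>i\<in>T. c)" using T(3) by simp
  also have "\<dots> \<le> (\<Sum>i\<in>T. norm (g i))" by (rule sum_mono) (use T(1) in auto)
  also have "\<dots> \<le> C" unfolding C_def
    by (rule finite_sum_le_infsum[OF summable T(2)]) (use T(1) in auto)
  finally show False using n \<open>0 < c\<close> by (simp add: divide_less_eq mult.commute)
qed

text \<open>Away from the finitely many factors with \<open>|f i - 1| \<ge> 1/2\<close>, the product is the exponential
  of the absolutely summable series of principal logarithms, since \<open>|Ln w| \<le> 2 |w - 1|\<close> there.\<close>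
lemma ex_has_prod_on:
  fixes f :: "'a \<Rightarrow> complex"
  assumes summable: "(\<lambda>i. norm (f i - 1)) summable_on A"
  shows "\<exists>p. has_prod_on f A p"
proof -
  define S where "S = {i\<in>A. 1/2 \<le> norm (f i - 1)}"
  have "finite S"
    unfolding S_def by (rule finite_norm_ge_if_summable_on) (use summable in simp_all)
  have near_1: "norm (f i - 1) < 1/2" if "i \<in> A - S" for i using that S_def by auto
  have "(\<lambda>i. 2 * norm (f i - 1)) summable_on (A - S)"
    by (intro summable_on_cmult_right summable_on_subset[OF summable]) auto
  moreover have "norm (Ln (f i)) \<le> 2 * norm (f i - 1)" if "i \<in> A - S" for i
    using norm_Ln_le[of "f i - 1"] near_1[OF that] by simp
  ultimately have "(\<lambda>i. norm (Ln (f i))) summable_on (A - S)"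
    by (rule summable_on_comparison_test) auto
  hence "(\<lambda>i. Ln (f i)) summable_on (A - S)" by (rule abs_summable_summable)
  then obtain L where "((\<lambda>i. Ln (f i)) has_sum L) (A - S)" unfolding summable_on_def ..
  hence "((\<lambda>F. exp (\<Sum>i\<in>F. Ln (f i))) \<longlongrightarrow> exp L) (finite_subsets_at_top (A - S))"
    unfolding has_sum_def by (rule tendsto_exp)
  moreover have "\<forall>\<^sub>F F in finite_subsets_at_top (A - S). exp (\<Sum>i\<in>F. Ln (f i)) = (\<Prod>i\<in>F. f i)"
  proof (rule eventually_finite_subsets_at_top_weakI)
    fix F assume F: "finite F" "F \<subseteq> A - S"
    have "f i \<noteq> 0" if "i \<in> F" for i using near_1[of i] F that by force
    thus "exp (\<Sum>i\<in>F. Ln (f i)) = (\<Prod>i\<in>F. f i)" using F(1) by (simp add: exp_sum)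
  qed
  ultimately have "has_prod_on f (A - S) (exp L)"
    unfolding has_prod_on_def by (rule tendsto_cong[THEN iffD1, rotated])
  hence "has_prod_on f (S \<union> (A - S)) ((\<Prod>i\<in>S. f i) * exp L)"
    by (intro has_prod_on_Un_disjoint has_prod_on_finite \<open>finite S\<close>) auto
  moreover have "S \<union> (A - S) = A" using S_def by auto
  ultimately show ?thesis by auto
qed

section \<open>The q-shifted factorial inside the unit disc\<close>

definition multi_indices :: "nat \<Rightarrow> nat list set" where
  "multi_indices n = {js. length js = n}"

definition qmonomial :: "complex list \<Rightarrow> nat list \<Rightarrow> complex" where
  "qmonomial qs js = prod_list (map2 (\<lambda>q j. q ^ j) qs js)"

definition qfactor :: "complex \<Rightarrow> complex list \<Rightarrow> nat list \<Rightarrow> complex" where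
  "qfactor x qs js = 1 - x * qmonomial qs js"

lemma qmonomial_Cons [simp]: "qmonomial (q # qs) (j # js) = q ^ j * qmonomial qs js"
  by (simp add: qmonomial_def)

lemma qmonomial_Nil [simp]: "qmonomial [] js = 1"
  by (simp add: qmonomial_def)

lemma multi_indices_Suc: "js \<in> multi_indices (Suc n) \<longleftrightarrow> (\<exists>j r. js = j # r \<and> r \<in> multi_indices n)"
  by (auto simp: multi_indices_def length_Suc_conv)

lemma multi_indices_Suc_Suc:
  "js \<in> multi_indices (Suc (Suc n)) \<longleftrightarrow> (\<exists>k m r. js = k # m # r \<and> r \<in> multi_indices n)"
  by (auto simp: multi_indices_Suc)

lemma sum_norm_qmonomial_le:
  assumes "\<forall>q\<in>set qs. norm q < 1" and "finite F" and "F \<subseteq> multi_indices (length qs)"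
  shows "(\<Sum>js\<in>F. norm (qmonomial qs js)) \<le> (\<Prod>q\<leftarrow>qs. 1 / (1 - norm q))"
  using assms
proof (induction qs arbitrary: F)
  case Nil
  hence "F \<subseteq> {[]}" by (auto simp: multi_indices_def)
  thus ?case by (auto simp: subset_singleton_iff)
next
  case (Cons q qs)
  have q: "norm q < 1" using Cons.prems(1) by simp
  define J R where "J = hd ` F" and "R = tl ` F"
  have "finite J" "finite R" using Cons.prems(2) by (simp_all add: J_def R_def)
  have F_sub: "F \<subseteq> (\<lambda>(j, r). j # r) ` (J \<times> R)"
  proof
    fix js assume "js \<in> F"
    hence "js \<in> multi_indices (Suc (length qs))" using Cons.prems(3) by auto
    then obtain j r where "js = j # r" by (auto simp: multi_indices_Suc)
    with \<open>js \<in> F\<close> show "js \<in> (\<lambda>(j, r). j # r) ` (J \<times> R)"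
      unfolding J_def R_def by (auto intro!: image_eqI[of _ _ "(j, r)"] image_eqI[of _ _ js])
  qed
  have "(\<Sum>js\<in>F. norm (qmonomial (q # qs) js))
      \<le> (\<Sum>js\<in>(\<lambda>(j, r). j # r) ` (J \<times> R). norm (qmonomial (q # qs) js))"
    by (rule sum_mono2) (use F_sub \<open>finite J\<close> \<open>finite R\<close> in simp_all)
  also have "\<dots> = (\<Sum>(j, r)\<in>J \<times> R. norm q ^ j * norm (qmonomial qs r))"
    by (subst sum.reindex) (auto simp: inj_on_def norm_mult norm_power intro!: sum.cong)
  also have "\<dots> = (\<Sum>j\<in>J. norm q ^ j) * (\<Sum>r\<in>R. norm (qmonomial qs r))"
    by (simp only: sum_product sum.cartesian_product)
  also have "\<dots> \<le> (1 / (1 - norm q)) * (\<Prod>q\<leftarrow>qs. 1 / (1 - norm q))"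
  proof (rule mult_mono)
    have "(\<Sum>j\<in>J. norm q ^ j) \<le> (\<Sum>j. norm q ^ j)"
      by (rule sum_le_suminf) (use q \<open>finite J\<close> in auto)
    thus "(\<Sum>j\<in>J. norm q ^ j) \<le> 1 / (1 - norm q)" using q by (simp add: suminf_geometric)
    show "(\<Sum>r\<in>R. norm (qmonomial qs r)) \<le> (\<Prod>q\<leftarrow>qs. 1 / (1 - norm q))"
      using Cons.prems \<open>finite R\<close> by (intro Cons.IH) (auto simp: R_def multi_indices_def)
  qed (use q in \<open>auto intro: sum_nonneg\<close>)
  finally show ?case by simp
qed

lemma ex_has_prod_on_qfactor:
  assumes "\<forall>q\<in>set qs. norm q < 1" and "A \<subseteq> multi_indices (length qs)"
  shows "\<exists>p. has_prod_on (qfactor x qs) A p"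
proof (rule ex_has_prod_on)
  have "(\<lambda>js. norm (qmonomial qs js)) summable_on multi_indices (length qs)"
    by (rule nonneg_bdd_above_summable_on)
      (use sum_norm_qmonomial_le[OF assms(1)] in \<open>auto intro!: bdd_aboveI2\<close>)
  hence "(\<lambda>js. norm x * norm (qmonomial qs js)) summable_on A"
    by (intro summable_on_cmult_right summable_on_subset[OF _ assms(2)])
  thus "(\<lambda>js. norm (qfactor x qs js - 1)) summable_on A"
    by (simp add: qfactor_def norm_mult)
qed

text \<open>The boxes \<open>{0..N-1}^(r+1)\<close> of the definition of \<open>qpoch_conv\<close> eventually contain every
  finite set of multi-indices, so the box products converge to the unconditional product.\<close>
lemma qpoch_conv_eqI:
  assumes "has_prod_on (qfactor x qs) (multi_indices (length qs)) p"
  shows "qpoch_conv x qs = p"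
proof -
  define box where "box N = {js. length js = length qs \<and> (\<forall>j\<in>set js. j < N)}" for N :: nat
  have "finite (box N)" for N
  proof (rule finite_subset)
    show "box N \<subseteq> {js. set js \<subseteq> {..<N} \<and> length js = length qs}" by (auto simp: box_def)
  qed (rule finite_lists_length_eq, simp)
  have "filterlim box (finite_subsets_at_top (multi_indices (length qs))) sequentially"
    unfolding filterlim_finite_subsets_at_top
  proof (intro allI impI)
    fix X assume X: "finite X \<and> X \<subseteq> multi_indices (length qs)"
    define N where "N = Suc (Max (insert 0 (\<Union>js\<in>X. set js)))"
    have "X \<subseteq> box N'" if "N \<le> N'" for N'
    proof
      fix js assume "js \<in> X"
      have "j < N'" if "j \<in> set js" for j
      proof -
        have "j \<le> Max (insert 0 (\<Union>js\<in>X. set js))"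
          using X that \<open>js \<in> X\<close> by (intro Max_ge) auto
        thus ?thesis using \<open>N \<le> N'\<close> unfolding N_def by simp
      qed
      thus "js \<in> box N'" using \<open>js \<in> X\<close> X by (auto simp: box_def multi_indices_def)
    qed
    thus "\<forall>\<^sub>F N' in sequentially. finite (box N') \<and> X \<subseteq> box N' \<and> box N' \<subseteq> multi_indices (length qs)"
      unfolding eventually_sequentially using \<open>\<And>N. finite (box N)\<close>
      by (auto simp: box_def multi_indices_def)
  qed
  from filterlim_compose[OF assms[unfolded has_prod_on_def] this]
  have "(\<lambda>N. \<Prod>js\<in>box N. qfactor x qs js) \<longlonglongrightarrow> p" by simp
  moreover have "(\<lambda>N. \<Prod>js\<in>box N. qfactor x qs js) = qpoch_box x qs"
    by (simp add: fun_eq_iff qpoch_box_def box_def qfactor_def qmonomial_def)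
  ultimately have "qpoch_box x qs \<longlonglongrightarrow> p" by simp
  thus ?thesis unfolding qpoch_conv_def by (rule limI)
qed

lemma has_prod_on_qfactor_image:
  assumes "\<forall>q\<in>set qs. norm q < 1" and "length qs' = n"
    and "inj_on h (multi_indices n)" and "h ` multi_indices n \<subseteq> multi_indices (length qs)"
    and "\<And>js. js \<in> multi_indices n \<Longrightarrow> qfactor x qs (h js) = qfactor x' qs' js"
  shows "has_prod_on (qfactor x qs) (h ` multi_indices n) (qpoch_conv x' qs')"
proof -
  obtain p where p: "has_prod_on (qfactor x qs) (h ` multi_indices n) p"
    using ex_has_prod_on_qfactor[OF assms(1,4)] by blast
  have "has_prod_on (qfactor x qs \<circ> h) (multi_indices n) p"
    by (rule has_prod_on_reindex[OF assms(3) p])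
  hence "has_prod_on (qfactor x' qs') (multi_indices n) p"
    by (rule has_prod_on_cong[rotated]) (simp add: assms(5))
  thus ?thesis using p assms(2) by (simp add: qpoch_conv_eqI)
qed

text \<open>The exponents \<open>(k, m)\<close> of \<open>(a, b)\<close> split into the cones \<open>k \<ge> m\<close>, written \<open>(i + m, m)\<close>,
  and \<open>k < m\<close>, written \<open>(k, i + k + 1)\<close>; there \<open>a^k b^m\<close> equals \<open>a^i (ab)^m\<close> and
  \<open>b \<cdot> b^i (ab)^k\<close> respectively.\<close>
lemma qpoch_conv_split:
  assumes "norm a < 1" and "norm b < 1" and "\<forall>q\<in>set qs. norm q < 1"
  shows "qpoch_conv x (a # b # qs)
       = qpoch_conv x (a # a * b # qs) * qpoch_conv (x * b) (b # a * b # qs)"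
proof -
  define I where "I = multi_indices (Suc (Suc (length qs)))"
  define low :: "nat list \<Rightarrow> nat list"
    where "low js = (case js of k # m # r \<Rightarrow> (k + m) # m # r | _ \<Rightarrow> js)" for js
  define high :: "nat list \<Rightarrow> nat list"
    where "high js = (case js of k # m # r \<Rightarrow> m # (k + m + 1) # r | _ \<Rightarrow> js)" for js
  have small: "\<forall>q\<in>set (a # b # qs). norm q < 1" using assms by simp
  have cover: "low ` I \<union> high ` I = I"
  proof (intro equalityI subsetI)
    fix js assume "js \<in> I"
    then obtain k m r where js: "js = k # m # r" "r \<in> multi_indices (length qs)"
      by (auto simp: I_def multi_indices_Suc_Suc)
    show "js \<in> low ` I \<union> high ` I"
    proof (cases "m \<le> k")
      case True
      hence "js = low ((k - m) # m # r)" by (simp add: js low_def)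
      thus ?thesis using js(2) by (auto simp: I_def multi_indices_Suc_Suc)
    next
      case False
      hence "js = high ((m - k - 1) # k # r)" by (simp add: js high_def)
      thus ?thesis using js(2) by (auto simp: I_def multi_indices_Suc_Suc)
    qed
  qed (auto simp: I_def multi_indices_Suc_Suc low_def high_def)
  have "has_prod_on (qfactor x (a # b # qs)) (low ` I) (qpoch_conv x (a # a * b # qs))"
    unfolding I_def using small cover
    by (intro has_prod_on_qfactor_image)
      (auto simp: I_def multi_indices_Suc_Suc low_def inj_on_def qfactor_def
        power_add power_mult_distrib ac_simps)
  moreover have "has_prod_on (qfactor x (a # b # qs)) (high ` I) (qpoch_conv (x * b) (b # a * b # qs))"
    unfolding I_def using small cover
    by (intro has_prod_on_qfactor_image)
      (auto simp: I_def multi_indices_Suc_Suc high_def inj_on_def qfactor_def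
        power_add power_mult_distrib ac_simps)
  moreover have "low ` I \<inter> high ` I = {}"
    by (auto simp: I_def multi_indices_Suc_Suc low_def high_def)
  ultimately have "has_prod_on (qfactor x (a # b # qs)) I
      (qpoch_conv x (a # a * b # qs) * qpoch_conv (x * b) (b # a * b # qs))"
    using has_prod_on_Un_disjoint cover by metis
  thus ?thesis by (intro qpoch_conv_eqI) (simp add: I_def)
qed

lemma qpoch_conv_swap:
  assumes "norm a < 1" and "norm b < 1" and "\<forall>q\<in>set qs. norm q < 1"
  shows "qpoch_conv x (a # b # qs) = qpoch_conv x (b # a # qs)"
proof -
  define I where "I = multi_indices (Suc (Suc (length qs)))"
  define swap :: "nat list \<Rightarrow> nat list"
    where "swap js = (case js of k # m # r \<Rightarrow> m # k # r | _ \<Rightarrow> js)" for js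
  have "swap ` I = I"
    by (force simp: I_def multi_indices_Suc_Suc swap_def image_iff)
  moreover have "has_prod_on (qfactor x (a # b # qs)) (swap ` I) (qpoch_conv x (b # a # qs))"
    unfolding I_def using assms \<open>swap ` I = I\<close>
    by (intro has_prod_on_qfactor_image)
      (auto simp: I_def multi_indices_Suc_Suc swap_def inj_on_def qfactor_def ac_simps)
  ultimately show ?thesis by (intro qpoch_conv_eqI) (simp add: I_def)
qed

section \<open>Parameters outside the unit disc\<close>

definition big_factors :: "complex list \<Rightarrow> complex list" where
  "big_factors qs = filter (\<lambda>q. 1 < norm q) qs"

definition fold_into_disc :: "complex \<Rightarrow> complex" where
  "fold_into_disc q = (if 1 < norm q then inverse q else q)"

definition inverse_if_odd :: "nat \<Rightarrow> complex \<Rightarrow> complex" where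
  "inverse_if_odd k z = (if even k then z else inverse z)"

lemma inverse_if_odd_add: "inverse_if_odd (m + n) z = inverse_if_odd m (inverse_if_odd n z)"
  by (simp add: inverse_if_odd_def)

lemma inverse_if_odd_mult: "inverse_if_odd k (u * v) = inverse_if_odd k u * inverse_if_odd k v"
  by (simp add: inverse_if_odd_def)

lemma inverse_if_odd_divide: "inverse_if_odd k (u / v) = inverse_if_odd k u / inverse_if_odd k v"
  by (simp add: inverse_if_odd_def divide_inverse mult.commute)

lemma inverse_if_odd_eq_0_iff [simp]: "inverse_if_odd k z = 0 \<longleftrightarrow> z = 0"
  by (simp add: inverse_if_odd_def)

lemma norm_inverse_less_1: "1 < norm (q::complex) \<Longrightarrow> norm (inverse q) < 1"
  by (simp add: norm_inverse inverse_less_1_iff)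

lemma norm_fold_into_disc_le: "norm (fold_into_disc q) \<le> 1"
  by (simp add: fold_into_disc_def norm_inverse inverse_le_1_iff)

lemma fold_into_disc_eq_self: "norm q \<le> 1 \<Longrightarrow> fold_into_disc q = q"
  by (simp add: fold_into_disc_def)

lemma norm_fold_into_disc_less: "norm q \<noteq> 1 \<Longrightarrow> norm (fold_into_disc q) < 1"
  by (simp add: fold_into_disc_def norm_inverse inverse_less_1_iff)

lemma qpoch_altdef:
  "qpoch y qs = inverse_if_odd (length (big_factors qs))
     (qpoch_conv (inverse (prod_list (big_factors qs)) * y) (map fold_into_disc qs))"
  by (simp add: qpoch_def Let_def inverse_if_odd_def big_factors_def fold_into_disc_def[abs_def])

lemma qpoch_fold_block:
  "qpoch y (P @ Q @ R) = inverse_if_odd (length (big_factors Q))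
     (qpoch (inverse (prod_list (big_factors Q)) * y) (P @ map fold_into_disc Q @ R))"
proof -
  have "big_factors (map fold_into_disc Q) = []"
    using norm_fold_into_disc_le by (simp add: big_factors_def filter_empty_conv not_less)
  moreover have "fold_into_disc (fold_into_disc q) = fold_into_disc q" for q
    by (rule fold_into_disc_eq_self[OF norm_fold_into_disc_le])
  ultimately show ?thesis
    by (simp add: qpoch_altdef big_factors_def inverse_if_odd_add[symmetric] ac_simps o_def)
qed

lemma qpoch_eq_qpoch_conv: "\<forall>q\<in>set qs. norm q \<le> 1 \<Longrightarrow> qpoch x qs = qpoch_conv x qs"
  by (simp add: qpoch_altdef big_factors_def filter_empty_conv not_less inverse_if_odd_def
      fold_into_disc_eq_self map_idI)

lemma qpoch_flip:
  assumes "b \<noteq> 0" and "norm b \<noteq> 1"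
  shows "qpoch y (P @ b # R) = inverse (qpoch (y * inverse b) (P @ inverse b # R))"
proof (cases "1 < norm b")
  case True
  thus ?thesis using qpoch_fold_block[of y P "[b]" R]
    by (simp add: big_factors_def fold_into_disc_def inverse_if_odd_def mult.commute)
next
  case False
  hence "1 < norm (inverse b)" using assms by (simp add: norm_inverse one_less_inverse_iff)
  hence "qpoch (y * inverse b) (P @ inverse b # R) = inverse (qpoch y (P @ b # R))"
    using qpoch_fold_block[of "y * inverse b" P "[inverse b]" R] assms(1)
    by (simp add: big_factors_def fold_into_disc_def inverse_if_odd_def mult.left_commute[of b])
  thus ?thesis by (metis inverse_inverse_eq)
qed

lemma qpoch_swap:
  assumes "\<forall>q\<in>set (a # b # R). norm q \<noteq> 1"
  shows "qpoch y (a # b # R) = qpoch y (b # a # R)"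
proof -
  have "qpoch_conv x (fold_into_disc a # fold_into_disc b # map fold_into_disc R)
      = qpoch_conv x (fold_into_disc b # fold_into_disc a # map fold_into_disc R)" for x
    using assms by (intro qpoch_conv_swap) (auto intro: norm_fold_into_disc_less)
  thus ?thesis by (simp add: qpoch_altdef big_factors_def ac_simps)
qed

section \<open>The splitting identity\<close>

lemma qpoch_split_lt_lt:
  assumes "norm a < 1" and "norm b < 1" and "\<forall>q\<in>set V. norm q \<noteq> 1"
  shows "qpoch y (a # b # V) = qpoch y (a # a * b # V) * qpoch (y * b) (b # a * b # V)"
proof -
  define c k where "c = inverse (prod_list (big_factors V))" and "k = length (big_factors V)"
  have V: "\<forall>q\<in>set (map fold_into_disc V). norm q < 1"
    using assms(3) by (auto intro: norm_fold_into_disc_less)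
  have fold: "qpoch u (p # q # V) = inverse_if_odd k (qpoch_conv (c * u) (p # q # map fold_into_disc V))"
    if "norm p < 1" "norm q < 1" for u p q
    using qpoch_fold_block[of u "[p, q]" V "[]"] that V
    by (simp add: c_def k_def qpoch_eq_qpoch_conv less_imp_le)
  have "norm (a * b) < 1"
    using norm_mult_less[OF assms(1,2)] by simp
  show ?thesis
    using assms(1,2) V \<open>norm (a * b) < 1\<close>
    by (simp add: fold qpoch_conv_split inverse_if_odd_mult mult.assoc)
qed

text \<open>Apply the case of two parameters in the unit disc to the pair \<open>(ab, b\<inverse>)\<close>.\<close>
lemma qpoch_split_lt_gt:
  assumes "norm a < 1" and "1 < norm b" and "norm (a * b) < 1" and V: "\<forall>q\<in>set V. norm q \<noteq> 1"
    and nz: "qpoch y (a # a * b # V) \<noteq> 0"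
  shows "qpoch y (a # b # V) = qpoch y (a # a * b # V) * qpoch (y * b) (b # a * b # V)"
proof -
  let ?P = "\<lambda>u p q. qpoch u (p # q # V)"
  have "b \<noteq> 0" and b': "norm (inverse b) < 1" using assms(2) norm_inverse_less_1 by auto
  have swap: "?P u p q = ?P u q p" if "norm p \<noteq> 1" "norm q \<noteq> 1" for u p q
    using qpoch_swap[of p q V u] that V by simp
  have base: "?P y (a * b) (inverse b) = ?P y (a * b) a * ?P (y * inverse b) (inverse b) a"
    using qpoch_split_lt_lt[of "a * b" "inverse b" V y] assms(3) b' V \<open>b \<noteq> 0\<close>
    by (simp add: mult.assoc)
  have "?P y a b = inverse (?P (y * inverse b) a (inverse b))"
    using qpoch_flip[of b y "[a]" V] \<open>b \<noteq> 0\<close> assms(2) by simp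
  also have "\<dots> = inverse (?P (y * inverse b) (inverse b) a)"
    using swap assms(1) b' by simp
  also have "\<dots> = ?P y (a * b) a * inverse (?P y (a * b) (inverse b))"
    using nz swap assms(1,3) by (simp add: base)
  also have "\<dots> = ?P y a (a * b) * ?P (y * b) b (a * b)"
    using qpoch_flip[of b "y * b" "[]" "a * b # V"] \<open>b \<noteq> 0\<close> assms(1-3) b' swap
    by (simp add: mult.assoc)
  finally show ?thesis .
qed

text \<open>Apply the case of two parameters in the unit disc to the pair \<open>(a\<inverse>, ab)\<close>.\<close>
lemma qpoch_split_gt_lt:
  assumes "1 < norm a" and "norm b < 1" and "norm (a * b) < 1" and V: "\<forall>q\<in>set V. norm q \<noteq> 1"
    and nz: "qpoch (y * b) (b # a * b # V) \<noteq> 0"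
  shows "qpoch y (a # b # V) = qpoch y (a # a * b # V) * qpoch (y * b) (b # a * b # V)"
proof -
  let ?P = "\<lambda>u p q. qpoch u (p # q # V)"
  have "a \<noteq> 0" and a': "norm (inverse a) < 1" using assms(1) norm_inverse_less_1 by auto
  have flip: "?P y a q = inverse (?P (y * inverse a) (inverse a) q)" for q
    using qpoch_flip[of a y "[]" "q # V"] \<open>a \<noteq> 0\<close> assms(1) by simp
  have cancel: "inverse a * (a * b) = b" "y * inverse a * (a * b) = y * b"
    using \<open>a \<noteq> 0\<close> by (simp_all add: field_simps)
  have base: "?P (y * inverse a) (inverse a) (a * b) = ?P (y * inverse a) (inverse a) b * ?P (y * b) (a * b) b"
    using qpoch_split_lt_lt[of "inverse a" "a * b" V "y * inverse a"] assms(3) a' V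
    unfolding cancel by simp
  have "?P y a b = inverse (?P (y * inverse a) (inverse a) b)"
    by (rule flip)
  also have "\<dots> = inverse (?P (y * inverse a) (inverse a) (a * b)) * ?P (y * b) (a * b) b"
    using nz qpoch_swap[of b "a * b" V "y * b"] assms(2,3) V by (simp add: base)
  also have "\<dots> = ?P y a (a * b) * ?P (y * b) b (a * b)"
    using flip qpoch_swap[of b "a * b" V "y * b"] assms(2,3) V by simp
  finally show ?thesis .
qed

lemma qpoch_split_norm_mult_less_1:
  assumes "norm (a * b) < 1" and "norm a \<noteq> 1" and "norm b \<noteq> 1" and V: "\<forall>q\<in>set V. norm q \<noteq> 1"
    and "qpoch y (a # a * b # V) \<noteq> 0" and "qpoch (y * b) (b # a * b # V) \<noteq> 0"
  shows "qpoch y (a # b # V) = qpoch y (a # a * b # V) * qpoch (y * b) (b # a * b # V)"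
proof -
  have "\<not> (1 < norm a \<and> 1 < norm b)"
    using assms(1) less_1_mult[of "norm a" "norm b"] by (auto simp: norm_mult)
  then consider "norm a < 1" "norm b < 1" | "norm a < 1" "1 < norm b" | "1 < norm a" "norm b < 1"
    using assms(2,3) by linarith
  thus ?thesis
  proof cases
    case 1
    thus ?thesis using qpoch_split_lt_lt V by blast
  next
    case 2
    thus ?thesis using qpoch_split_lt_gt assms(1,5) V by blast
  next
    case 3
    thus ?thesis using qpoch_split_gt_lt assms(1,6) V by blast
  qed
qed

lemma qpoch_flip_two:
  assumes "p \<noteq> 0" and "q \<noteq> 0" and "norm p \<noteq> 1" and "norm q \<noteq> 1"
  shows "qpoch u (p # q # R) = qpoch (u * inverse (p * q)) (inverse p # inverse q # R)"
  using qpoch_flip[of p u "[]" "q # R"] qpoch_flip[of q "u * inverse p" "[inverse p]" R] assms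
  by (simp add: mult.assoc)

lemma qpoch_split_terms_inverse:
  fixes y :: complex
  assumes "a \<noteq> 0" and "b \<noteq> 0" and "\<forall>q\<in>set (a # b # a * b # V). norm q \<noteq> 1"
  defines "Y \<equiv> y * inverse (a * b)"
  shows "qpoch y (a # b # V) = qpoch Y (inverse b # inverse a # V)"
    and "qpoch y (a # a * b # V) = qpoch (Y * inverse a) (inverse a # inverse b * inverse a # V)"
    and "qpoch (y * b) (b # a * b # V) = qpoch Y (inverse b # inverse b * inverse a # V)"
proof -
  have "norm (inverse q) \<noteq> 1" if "norm q \<noteq> 1" for q :: complex
    using that by (simp add: norm_inverse)
  thus "qpoch y (a # b # V) = qpoch Y (inverse b # inverse a # V)"
    using qpoch_flip_two[of a b y V] qpoch_swap[of "inverse a" "inverse b" V Y] assms by simp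
  show "qpoch y (a # a * b # V) = qpoch (Y * inverse a) (inverse a # inverse b * inverse a # V)"
    using qpoch_flip_two[of a "a * b" y V] assms by (simp add: ac_simps)
  show "qpoch (y * b) (b # a * b # V) = qpoch Y (inverse b # inverse b * inverse a # V)"
    using qpoch_flip_two[of b "a * b" "y * b" V] assms by (simp add: field_simps)
qed

text \<open>The nonvanishing hypotheses serve to cancel factors when exactly one of \<open>a\<close>, \<open>b\<close> lies
  outside the unit disc; there the terms involve inverses, and \<open>inverse 0 = 0\<close>.\<close>
lemma qpoch_split:
  assumes "a \<noteq> 0" and "b \<noteq> 0" and norms: "\<forall>q\<in>set (a # b # a * b # V). norm q \<noteq> 1"
    and nz: "qpoch y (a # a * b # V) \<noteq> 0" "qpoch (y * b) (b # a * b # V) \<noteq> 0"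
  shows "qpoch y (a # b # V) = qpoch y (a # a * b # V) * qpoch (y * b) (b # a * b # V)"
proof (cases "norm (a * b) < 1")
  case True
  thus ?thesis using qpoch_split_norm_mult_less_1 norms nz by simp
next
  case False
  hence "1 < norm (a * b)" using norms by simp
  hence "norm (inverse b * inverse a) < 1"
    by (simp add: norm_mult norm_inverse inverse_less_1_iff mult.commute flip: inverse_mult_distrib)
  thus ?thesis
    using qpoch_split_norm_mult_less_1[of "inverse b" "inverse a" V "y * inverse (a * b)"]
      qpoch_split_terms_inverse[OF assms(1-3), of y] norms nz
    by (simp add: norm_inverse mult.commute)
qed

lemma qpoch_ratio:
  assumes "a \<noteq> 0" and "b \<noteq> 0" and norms: "\<forall>q\<in>set (a # b # a * b # V). norm q \<noteq> 1"
    and "qpoch x (a # a * b # V) \<noteq> 0" and "qpoch x (inverse b # a * b # V) \<noteq> 0"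
  shows "qpoch x (a # b # V) = qpoch x (a # a * b # V) / qpoch x (inverse b # a * b # V)"
proof -
  have "qpoch (x * b) (b # a * b # V) = inverse (qpoch x (inverse b # a * b # V))"
    using qpoch_flip[of b "x * b" "[]" "a * b # V"] assms(2) norms by (simp add: mult.assoc)
  thus ?thesis
    using qpoch_split[OF assms(1-3), of x] assms(4,5) by (simp add: divide_inverse)
qed

lemma qpoch_ratio_rescaled:
  assumes "a \<noteq> 0" and "b \<noteq> 0" and norms: "\<forall>q\<in>set (a # b # a * b # V). norm q \<noteq> 1"
    and "qpoch (x * a) (a # a * b # V) \<noteq> 0" and "qpoch (x * inverse b) (inverse b # a * b # V) \<noteq> 0"
  shows "qpoch x (a # b # V)
       = qpoch (x * a) (a # a * b # V) / qpoch (x * inverse b) (inverse b # a * b # V)"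
proof -
  have flip: "qpoch x (b # a * b # V) = inverse (qpoch (x * inverse b) (inverse b # a * b # V))"
    using qpoch_flip[of b x "[]" "a * b # V"] assms(2) norms by simp
  have "qpoch x (a # b # V) = qpoch x (b # b * a # V) * qpoch (x * a) (a # b * a # V)"
    using qpoch_swap[of a b V x] qpoch_split[of b a V x] flip assms by (simp add: ac_simps)
  thus ?thesis using flip by (simp add: divide_inverse ac_simps)
qed

section \<open>Elliptic gamma functions\<close>

definition ell_gamma_q :: "complex \<Rightarrow> complex list \<Rightarrow> complex" where
  "ell_gamma_q x qs =
     qpoch (inverse x * prod_list qs) qs * inverse_if_odd (length qs - 1) (qpoch x qs)"

lemma ell_gamma_q_ratio:
  assumes "q0 \<noteq> 0" and "q1 \<noteq> 0" and norms: "\<forall>q\<in>set (q0 # q1 # q0 * q1 # W). norm q \<noteq> 1"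
    and nz: "ell_gamma_q x (q0 # q0 * q1 # W) \<noteq> 0" "ell_gamma_q x (inverse q1 # q0 * q1 # W) \<noteq> 0"
  shows "ell_gamma_q x (q0 # q1 # W)
       = ell_gamma_q x (q0 # q0 * q1 # W) / ell_gamma_q x (inverse q1 # q0 * q1 # W)"
proof -
  define X where "X = inverse x * prod_list (q0 # q1 # W)"
  have X: "inverse x * prod_list (q0 # q0 * q1 # W) = X * q0"
    "inverse x * prod_list (inverse q1 # q0 * q1 # W) = X * inverse q1"
    using assms(2) by (simp_all add: X_def field_simps)
  have "qpoch (X * q0) (q0 # q0 * q1 # W) \<noteq> 0" "qpoch x (q0 # q0 * q1 # W) \<noteq> 0"
    "qpoch (X * inverse q1) (inverse q1 # q0 * q1 # W) \<noteq> 0" "qpoch x (inverse q1 # q0 * q1 # W) \<noteq> 0"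
    using nz unfolding ell_gamma_q_def X by auto
  hence "qpoch X (q0 # q1 # W)
      = qpoch (X * q0) (q0 # q0 * q1 # W) / qpoch (X * inverse q1) (inverse q1 # q0 * q1 # W)"
    and "qpoch x (q0 # q1 # W)
      = qpoch x (q0 # q0 * q1 # W) / qpoch x (inverse q1 # q0 * q1 # W)"
    using qpoch_ratio_rescaled[OF assms(1-3)] qpoch_ratio[OF assms(1-3)] by simp_all
  thus ?thesis
    unfolding ell_gamma_q_def X X_def[symmetric] by (simp add: inverse_if_odd_divide)
qed

definition qexp :: "complex \<Rightarrow> complex" where
  "qexp w = exp (2 * pi * \<i> * w)"

lemma ell_gamma_eq_ell_gamma_q: "ell_gamma z ws = ell_gamma_q (qexp z) (map qexp ws)"
  by (simp add: ell_gamma_def ell_gamma_q_def qexp_def[abs_def] Let_def inverse_if_odd_def)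

lemma norm_qexp_eq_1_iff: "norm (qexp w) = 1 \<longleftrightarrow> Im w = 0"
  by (simp add: qexp_def norm_exp_eq_Re)

lemma qexp_add: "qexp (u + v) = qexp u * qexp v"
  by (simp add: qexp_def distrib_left exp_add)

lemma qexp_minus: "qexp (- w) = inverse (qexp w)"
  by (simp add: qexp_def exp_minus)

lemma qexp_neq_0 [simp]: "qexp w \<noteq> 0"
  by (simp add: qexp_def)

theorem proposition2p6:
  fixes z w0 w1 :: complex and ws :: "complex list"
  assumes "Im w0 \<noteq> 0" and "Im w1 \<noteq> 0" and "\<forall>w\<in>set ws. Im w \<noteq> 0"
    and "Im (w0 + w1) \<noteq> 0"
    and "ell_gamma z (w0 # (w0 + w1) # ws) \<noteq> 0"
    and "ell_gamma z ((- w1) # (w0 + w1) # ws) \<noteq> 0"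
  shows "ell_gamma z (w0 # w1 # ws) / ell_gamma z (w0 # (w0 + w1) # ws)
       = 1 / ell_gamma z ((- w1) # (w0 + w1) # ws)"
proof -
  have "norm (qexp w0 * qexp w1) \<noteq> 1"
    using assms(4) by (simp add: norm_qexp_eq_1_iff flip: qexp_add)
  hence "ell_gamma z (w0 # w1 # ws)
      = ell_gamma z (w0 # (w0 + w1) # ws) / ell_gamma z ((- w1) # (w0 + w1) # ws)"
    using ell_gamma_q_ratio[of "qexp w0" "qexp w1" "map qexp ws" "qexp z"] assms
    by (simp add: ell_gamma_eq_ell_gamma_q qexp_add qexp_minus norm_qexp_eq_1_iff)
  thus ?thesis using assms(5) by simp
qed

end
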